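(* Let $\lambda_{\min}$ be the smallest nonzero eigenvalue of $L$. Then $N-m_V=M-m_H$, and $$\lambda_{\min}\le\frac{N}{N-m_V}=\frac{N}{M-m_H}\le\lambda_N.$$ Moreover, either of the two inequalities is an equality if and only if $\lambda_{\min}=\lambda_N$.
   Context: Let $\Gamma=(V,H,\mathcal C)$ be a hypergraph with real coefficients: $V=\{v_1,\dots,v_N\}$ is a finite set of vertices, $H=(h_1,\dots,h_M)$ is a finite family of subsets $h_j\subseteq V$ called hyperedges (repetitions allowed; hyperedges are distinguished by their index), and $\mathcal C=\{C_{v,h}\in\mathbb R\}$ is a family of real coefficients with $C_{v,h}=0$ if and only if $v\notin h$. Standing assumptions: every vertex lies in at least one hyperedge, and $\Gamma$ is connected. The degree of $v$ is $\deg v=\sum_{h\in H}C_{v,h}^2>0$. The vertex normalized Laplacian is $Lf(v)=\frac{1}{\deg v}\sum_{h\in H}C_{v,h}\sum_{w\in V}C_{w,h}f(w)$ for $f:V\to\mathbb R$; its eigenvalues (real and non-negative) are $\lambda_1\le\dots\le\lambda_N$. The hyperedge normalized Laplacian is $L^H\gamma(h)=\sum_{v\in V}\frac{C_{v,h}}{\deg v}\sum_{h'\in H}C_{v,h'}\gamma(h')$ for $\gamma:H\to\mathbb R$. Here $m_V$ and $m_H$ are the multiplicities of the eigenvalue $0$ of $L$ and of $L^H$ respectively. *)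

theory Defs
  imports "Jordan_Normal_Form.Char_Poly"
begin

text \<open>Vertices are 0..<N, hyperedges are 0..<M; C i j is the coefficient C_{v_i,h_j}.
  The hyperedge h_j is the support {i. C i j \<noteq> 0}.\<close>

definition hdeg :: "nat \<Rightarrow> (nat \<Rightarrow> nat \<Rightarrow> real) \<Rightarrow> nat \<Rightarrow> real" where
  "hdeg M C i = (\<Sum>j<M. (C i j)^2)"

definition vertex_laplacian :: "nat \<Rightarrow> nat \<Rightarrow> (nat \<Rightarrow> nat \<Rightarrow> real) \<Rightarrow> real mat" where
  "vertex_laplacian N M C = mat N N (\<lambda>(i, k). (\<Sum>j<M. C i j * C k j) / hdeg M C i)"

definition hyperedge_laplacian :: "nat \<Rightarrow> nat \<Rightarrow> (nat \<Rightarrow> nat \<Rightarrow> real) \<Rightarrow> real mat" where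
  "hyperedge_laplacian N M C = mat M M (\<lambda>(j, j'). (\<Sum>i<N. C i j * C i j' / hdeg M C i))"

definition no_isolated :: "nat \<Rightarrow> nat \<Rightarrow> (nat \<Rightarrow> nat \<Rightarrow> real) \<Rightarrow> bool" where
  "no_isolated N M C = (\<forall>i<N. \<exists>j<M. C i j \<noteq> 0)"

definition hconnected :: "nat \<Rightarrow> nat \<Rightarrow> (nat \<Rightarrow> nat \<Rightarrow> real) \<Rightarrow> bool" where
  "hconnected N M C = (\<forall>i<N. \<forall>k<N.
     (\<lambda>a b. a < N \<and> b < N \<and> (\<exists>j<M. C a j \<noteq> 0 \<and> C b j \<noteq> 0))\<^sup>*\<^sup>* i k)"

definition zero_mult :: "real mat \<Rightarrow> nat" where
  "zero_mult A = order 0 (char_poly A)"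

end

theory Submission
  imports Defs "Jordan_Normal_Form.Schur_Decomposition"
begin

text \<open>Both Laplacians factor through the coefficient matrix: \<open>L = A B\<close> and \<open>L\<^sup>H = B A\<close>
  with \<open>B = C\<^sup>T\<close> and \<open>A = D\<^sup>-\<^sup>1 C\<close>.  Sylvester's identity
  \<open>x\<^sup>M det (x - A B) = x\<^sup>N det (x - B A)\<close> shows that the nonzero eigenvalues of the two
  Laplacians agree with multiplicities, whence \<open>N - m\<^sub>V = M - m\<^sub>H\<close>.  The eigenvalues of \<open>L\<close>
  are real, being Rayleigh quotients of the Gram matrix of the rows of \<open>C\<close> relative to
  the positive degree matrix \<open>D\<close>, and their sum is \<open>tr L = N\<close>.  So the \<open>N - m\<^sub>V\<close> nonzero
  eigenvalues have mean \<open>N / (N - m\<^sub>V)\<close>, and a mean lies strictly between the minimum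
  and the maximum unless these coincide.\<close>

lemma order_prod_list_linear:
  fixes rs :: "'a::idom list"
  shows "Polynomial.order a (\<Prod>r\<leftarrow>rs. [:- r, 1:]) = length (filter (\<lambda>r. r = a) rs)"
proof (induction rs)
  case (Cons r rs)
  have "Polynomial.order a (\<Prod>s\<leftarrow>r # rs. [:- s, 1:])
      = Polynomial.order a [:- r, 1:] + Polynomial.order a (\<Prod>s\<leftarrow>rs. [:- s, 1:])"
    unfolding list.map prod_list.Cons
    by (rule order_mult) (simp only: mult_eq_0_iff prod_list_zero_iff pCons_eq_0_iff, auto)
  then show ?case using Cons.IH by (auto simp: order_linear')
qed (simp add: order_0I)

lemma det_scalar_add_mult_commute:
  fixes P :: "'a::idom mat"
  assumes P: "P \<in> carrier_mat n m" and Q: "Q \<in> carrier_mat m n"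
  shows "x ^ m * det (x \<cdot>\<^sub>m 1\<^sub>m n + P * Q) = x ^ n * det (x \<cdot>\<^sub>m 1\<^sub>m m + Q * P)"
proof -
  define G where "G = four_block_mat (x \<cdot>\<^sub>m 1\<^sub>m n) (- P) Q (1\<^sub>m m)"
  define H where "H = four_block_mat (x \<cdot>\<^sub>m 1\<^sub>m n) (- P) (x \<cdot>\<^sub>m Q) (x \<cdot>\<^sub>m 1\<^sub>m m)"
  have mP: "- P \<in> carrier_mat n m" using P by simp
  have PQ: "P * Q \<in> carrier_mat n n" and QP: "Q * P \<in> carrier_mat m m" using P Q by auto
  have G_carrier: "G \<in> carrier_mat (n + m) (n + m)" unfolding G_def using P Q by auto
  have G_factor: "G = four_block_mat (1\<^sub>m n) (- P) (0\<^sub>m m n) (1\<^sub>m m)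
      * four_block_mat (x \<cdot>\<^sub>m 1\<^sub>m n + P * Q) (0\<^sub>m n m) Q (1\<^sub>m m)"
    unfolding G_def using P Q PQ
    by (subst mult_four_block_mat[OF one_carrier_mat mP zero_carrier_mat one_carrier_mat _
          zero_carrier_mat Q one_carrier_mat]) auto
  have H_factor_G: "H = four_block_mat (1\<^sub>m n) (0\<^sub>m n m) (0\<^sub>m m n) (x \<cdot>\<^sub>m 1\<^sub>m m) * G"
    unfolding G_def H_def using P Q
    by (subst mult_four_block_mat[OF one_carrier_mat zero_carrier_mat zero_carrier_mat
          smult_carrier_mat[OF one_carrier_mat] smult_carrier_mat[OF one_carrier_mat] mP Q
          one_carrier_mat]) auto
  have H_factor_QP: "H = four_block_mat (1\<^sub>m n) (0\<^sub>m n m) Q (1\<^sub>m m)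
      * four_block_mat (x \<cdot>\<^sub>m 1\<^sub>m n) (- P) (0\<^sub>m m n) (x \<cdot>\<^sub>m 1\<^sub>m m + Q * P)"
    unfolding H_def using P Q QP
    by (subst mult_four_block_mat[OF one_carrier_mat zero_carrier_mat Q one_carrier_mat
          smult_carrier_mat[OF one_carrier_mat] mP zero_carrier_mat add_carrier_mat[OF QP]]) auto
  have "det G = det (x \<cdot>\<^sub>m 1\<^sub>m n + P * Q)"
    unfolding G_factor using P Q PQ
    by (subst det_mult[of _ "n + m"], auto simp: det_four_block_mat_lower_left_zero[of _ n _ m]
        det_four_block_mat_upper_right_zero[of _ n _ m])
  moreover have "det H = x ^ m * det G"
    unfolding H_factor_G using G_carrier
    by (subst det_mult[of _ "n + m"], auto simp: det_four_block_mat_upper_right_zero[of _ n _ m])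
  moreover have "det H = x ^ n * det (x \<cdot>\<^sub>m 1\<^sub>m m + Q * P)"
    unfolding H_factor_QP using P Q QP
    by (subst det_mult[of _ "n + m"], auto simp: det_four_block_mat_lower_left_zero[of _ n _ m]
        det_four_block_mat_upper_right_zero[of _ n _ m])
  ultimately show ?thesis by simp
qed

lemma char_poly_mult_commute:
  fixes A :: "'a::idom mat"
  assumes A: "A \<in> carrier_mat n m" and B: "B \<in> carrier_mat m n"
  shows "[:0, 1:] ^ m * char_poly (A * B) = [:0, 1:] ^ n * char_poly (B * A)"
proof -
  define P where "P = map_mat (\<lambda>a. [:a:] * [:- 1:]) A"
  define Q where "Q = map_mat (\<lambda>a. [:a:]) B"
  have neg_const: "(\<lambda>a::'a. [:a:] * [:- 1:]) = (\<lambda>a. [:- a:])" by auto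
  have "char_poly (A * B) = det ([:0, 1:] \<cdot>\<^sub>m 1\<^sub>m n + P * Q)"
    using A B map_poly_mult(2)[OF A B, of "[:- 1:]"]
    unfolding char_poly_defs P_def Q_def neg_const by simp
  moreover have "char_poly (B * A) = det ([:0, 1:] \<cdot>\<^sub>m 1\<^sub>m m + Q * P)"
    using A B map_poly_mult(3)[OF B A, of "[:- 1:]"]
    unfolding char_poly_defs P_def Q_def neg_const by simp
  moreover have "P \<in> carrier_mat n m" "Q \<in> carrier_mat m n"
    using A B unfolding P_def Q_def by auto
  ultimately show ?thesis using det_scalar_add_mult_commute by metis
qed

lemma order_zero_char_poly_mult_commute:
  fixes A :: "'a::idom mat"
  assumes A: "A \<in> carrier_mat n m" and B: "B \<in> carrier_mat m n"
  shows "m + Polynomial.order 0 (char_poly (A * B)) = n + Polynomial.order 0 (char_poly (B * A))"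
proof -
  have "char_poly (A * B) \<noteq> 0" "char_poly (B * A) \<noteq> 0"
    using degree_monic_char_poly[of "A * B" n] degree_monic_char_poly[of "B * A" m] A B by auto
  then have "Polynomial.order 0 ([:0, 1:] ^ m * char_poly (A * B))
      = m + Polynomial.order 0 (char_poly (A * B))"
    and "Polynomial.order 0 ([:0, 1:] ^ n * char_poly (B * A))
      = n + Polynomial.order 0 (char_poly (B * A))"
    by (simp_all add: order_mult order_linear_power)
  then show ?thesis using char_poly_mult_commute[OF A B] by simp
qed

definition mat_trace :: "'a::comm_ring_1 mat \<Rightarrow> 'a" where
  "mat_trace A = (\<Sum>i<dim_row A. A $$ (i, i))"

lemma mat_trace_mult_commute:
  assumes A: "A \<in> carrier_mat n m" and B: "B \<in> carrier_mat m n"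
  shows "mat_trace (A * B) = mat_trace (B * A)"
proof -
  have "mat_trace (A * B) = (\<Sum>i<n. \<Sum>j<m. A $$ (i, j) * B $$ (j, i))"
    using A B by (simp add: mat_trace_def scalar_prod_def atLeast0LessThan)
  also have "\<dots> = (\<Sum>j<m. \<Sum>i<n. B $$ (j, i) * A $$ (i, j))"
    by (subst sum.swap) (simp add: mult.commute)
  also have "\<dots> = mat_trace (B * A)"
    using A B by (simp add: mat_trace_def scalar_prod_def atLeast0LessThan)
  finally show ?thesis .
qed

lemma mat_trace_similar:
  assumes "similar_mat_wit A B P Q"
  shows "mat_trace A = mat_trace B"
proof -
  obtain n where carrier: "{A, B, P, Q} \<subseteq> carrier_mat n n" and "Q * P = 1\<^sub>m n"
    and "A = P * B * Q"
    using similar_mat_witD[OF refl assms] by blast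
  then have "mat_trace A = mat_trace (Q * (P * B))"
    by (metis insert_subset mat_trace_mult_commute mult_carrier_mat)
  also have "Q * (P * B) = B"
    using carrier \<open>Q * P = 1\<^sub>m n\<close> by (auto simp: assoc_mult_mat[symmetric, of Q n n P n B n])
  finally show ?thesis .
qed

lemma mat_trace_eq_sum_list_diag_mat: "mat_trace A = sum_list (diag_mat A)"
  by (simp add: mat_trace_def diag_mat_def sum_list_distinct_conv_sum_set atLeast0LessThan)

lemma mat_trace_eq_sum_list_eigenvalues:
  fixes A :: "'a::conjugatable_ordered_field mat"
  assumes A: "A \<in> carrier_mat n n" and factorized: "char_poly A = (\<Prod>r\<leftarrow>rs. [:- r, 1:])"
  shows "mat_trace A = sum_list rs"
proof -
  obtain B P Q where "schur_decomposition A rs = (B, P, Q)" by (cases "schur_decomposition A rs")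
  with schur_decomposition[OF A factorized] have "similar_mat_wit A B P Q" and "diag_mat B = rs"
    by auto
  then show ?thesis using mat_trace_similar mat_trace_eq_sum_list_diag_mat by metis
qed

lemma char_poly_factorized_real:
  fixes A :: "real mat"
  assumes A: "A \<in> carrier_mat n n"
    and real_spectrum: "\<And>a. eigenvalue (map_mat complex_of_real A) a \<Longrightarrow> a \<in> \<real>"
  shows "\<exists>rs. char_poly A = (\<Prod>r\<leftarrow>rs. [:- r, 1:]) \<and> length rs = n"
proof -
  interpret of_real_poly: map_poly_inj_idom_hom complex_of_real ..
  let ?Ac = "map_mat complex_of_real A"
  have Ac: "?Ac \<in> carrier_mat n n" using A by simp
  obtain as where as: "char_poly ?Ac = (\<Prod>a\<leftarrow>as. [:- a, 1:])" "length as = n"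
    using char_poly_factorized[OF Ac] by blast
  have "a \<in> \<real>" if "a \<in> set as" for a
    using that real_spectrum eigenvalue_root_char_poly[OF Ac]
    by (auto simp: as(1) poly_prod_list_zero_iff)
  then have as_real: "map (complex_of_real \<circ> Re) as = as"
    by (intro map_idI) (auto elim: Reals_cases)
  have "map_poly complex_of_real (char_poly A) = char_poly ?Ac"
    using of_real_hom.char_poly_hom[OF A] by (rule sym)
  also have "\<dots> = (\<Prod>a\<leftarrow>map complex_of_real (map Re as). [:- a, 1:])"
    unfolding as(1) map_map as_real ..
  also have "\<dots> = map_poly complex_of_real (\<Prod>r\<leftarrow>map Re as. [:- r, 1:])"
    by (simp add: of_real_poly.hom_prod_list o_def)
  finally have "char_poly A = (\<Prod>r\<leftarrow>map Re as. [:- r, 1:])"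
    by (simp add: of_real_poly.eq_iff)
  with as(2) show ?thesis by (metis length_map)
qed

lemma length_mult_le_sum_list:
  fixes xs :: "real list"
  assumes "\<And>x. x \<in> set xs \<Longrightarrow> c \<le> x"
  shows "real (length xs) * c \<le> sum_list xs"
  using assms by (induction xs) (auto simp: algebra_simps intro: add_mono)

lemma length_mult_less_sum_list:
  fixes xs :: "real list"
  assumes "\<And>x. x \<in> set xs \<Longrightarrow> c \<le> x" and "y \<in> set xs" and "c < y"
  shows "real (length xs) * c < sum_list xs"
  using assms
proof (induction xs)
  case (Cons x xs)
  show ?case
  proof (cases "y = x")
    case True
    then show ?thesis using Cons.prems length_mult_le_sum_list[of xs c] by (auto simp: algebra_simps)
  next
    case False
    then show ?thesis using Cons by (auto simp: algebra_simps intro: add_le_less_mono)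
  qed
qed simp

lemma mean_bounds:
  fixes xs :: "real list"
  assumes "xs \<noteq> []"
  defines "\<mu> \<equiv> sum_list xs / length xs"
  shows "Min (set xs) \<le> \<mu>" and "\<mu> \<le> Max (set xs)"
    and "Min (set xs) < Max (set xs) \<Longrightarrow> Min (set xs) < \<mu> \<and> \<mu> < Max (set xs)"
proof -
  have len: "real (length xs) > 0" using assms by simp
  have Min_in: "Min (set xs) \<in> set xs" and Max_in: "Max (set xs) \<in> set xs"
    using assms by auto
  have lower: "\<And>x. x \<in> set xs \<Longrightarrow> Min (set xs) \<le> x"
    and upper: "\<And>x. x \<in> set (map uminus xs) \<Longrightarrow> - Max (set xs) \<le> x" by auto
  have neg_sum: "sum_list (map uminus xs) = - sum_list xs" by (induction xs) auto
  show "Min (set xs) \<le> \<mu>"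
    using length_mult_le_sum_list[OF lower] len by (simp add: \<mu>_def field_simps)
  show "\<mu> \<le> Max (set xs)"
    using length_mult_le_sum_list[of "map uminus xs", OF upper] len neg_sum
    by (simp add: \<mu>_def field_simps)
  assume gap: "Min (set xs) < Max (set xs)"
  have "- Min (set xs) \<in> set (map uminus xs)" using Min_in by simp
  then show "Min (set xs) < \<mu> \<and> \<mu> < Max (set xs)"
    using length_mult_less_sum_list[OF lower Max_in gap]
      length_mult_less_sum_list[of "map uminus xs", OF upper, of "- Min (set xs)"] gap len neg_sum
    by (auto simp: \<mu>_def field_simps)
qed

lemma nonzero_mean_bounds:
  fixes rs :: "real list"
  assumes pos: "sum_list rs > 0"
  defines "K \<equiv> length (filter (\<lambda>r. r \<noteq> 0) rs)"
    and "lmin \<equiv> Min {r. r \<in> set rs \<and> r \<noteq> 0}" and "lmax \<equiv> Max (set rs)"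
  shows "K > 0" and "lmin \<le> sum_list rs / K" and "sum_list rs / K \<le> lmax"
    and "lmin = sum_list rs / K \<longleftrightarrow> lmin = lmax"
    and "sum_list rs / K = lmax \<longleftrightarrow> lmin = lmax"
proof -
  define nz where "nz = filter (\<lambda>r. r \<noteq> 0) rs"
  have sum_nz: "sum_list nz = sum_list rs" unfolding nz_def by (induction rs) auto
  then have "nz \<noteq> []" using pos by auto
  then show "K > 0" unfolding K_def nz_def[symmetric] by simp
  have lmin: "lmin = Min (set nz)" unfolding lmin_def nz_def by (simp add: conj_commute)
  note bounds = mean_bounds[OF \<open>nz \<noteq> []\<close>, unfolded sum_nz K_def[folded nz_def, symmetric]]
  have "sum_list rs / K > 0" using pos \<open>K > 0\<close> by simp
  with bounds(2) have "Max (set nz) > 0" by linarith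
  have lmax: "lmax = Max (set nz)"
  proof (rule antisym)
    have "Max (set nz) \<in> set nz" using \<open>nz \<noteq> []\<close> by simp
    then have "Max (set nz) \<le> lmax" unfolding lmax_def nz_def by simp
    moreover have "lmax \<in> set rs" unfolding lmax_def using pos by (intro Max_in) auto
    ultimately have "lmax \<in> set nz" using \<open>Max (set nz) > 0\<close> unfolding nz_def by auto
    then show "lmax \<le> Max (set nz)" by simp
    show "Max (set nz) \<le> lmax" by fact
  qed
  show "lmin \<le> sum_list rs / K" and "sum_list rs / K \<le> lmax"
    using bounds(1,2) unfolding lmin lmax .
  show "lmin = sum_list rs / K \<longleftrightarrow> lmin = lmax" and "sum_list rs / K = lmax \<longleftrightarrow> lmin = lmax"
    using bounds unfolding lmin lmax by (auto simp: order.order_iff_strict)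
qed

lemma hdeg_pos:
  assumes "no_isolated N M C" and "i < N"
  shows "hdeg M C i > 0"
proof -
  obtain j where "j < M" "C i j \<noteq> 0" using assms unfolding no_isolated_def by auto
  then show ?thesis unfolding hdeg_def by (intro sum_pos2[of _ j]) auto
qed

lemma vertex_laplacian_carrier: "vertex_laplacian N M C \<in> carrier_mat N N"
  by (simp add: vertex_laplacian_def)

definition coefficient_mat :: "nat \<Rightarrow> nat \<Rightarrow> (nat \<Rightarrow> nat \<Rightarrow> real) \<Rightarrow> real mat" where
  "coefficient_mat N M C = mat M N (\<lambda>(j, i). C i j)"

definition degree_scaled_coefficient_mat :: "nat \<Rightarrow> nat \<Rightarrow> (nat \<Rightarrow> nat \<Rightarrow> real) \<Rightarrow> real mat" where
  "degree_scaled_coefficient_mat N M C = mat N M (\<lambda>(i, j). C i j / hdeg M C i)"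

lemma vertex_laplacian_eq_mult:
  "vertex_laplacian N M C = degree_scaled_coefficient_mat N M C * coefficient_mat N M C"
  by (rule eq_matI) (auto simp: vertex_laplacian_def degree_scaled_coefficient_mat_def
      coefficient_mat_def scalar_prod_def sum_divide_distrib atLeast0LessThan)

lemma hyperedge_laplacian_eq_mult:
  "hyperedge_laplacian N M C = coefficient_mat N M C * degree_scaled_coefficient_mat N M C"
  by (rule eq_matI) (auto simp: hyperedge_laplacian_def degree_scaled_coefficient_mat_def
      coefficient_mat_def scalar_prod_def atLeast0LessThan)

lemma zero_mult_laplacians:
  "M + zero_mult (vertex_laplacian N M C) = N + zero_mult (hyperedge_laplacian N M C)"
  unfolding zero_mult_def vertex_laplacian_eq_mult hyperedge_laplacian_eq_mult
  by (rule order_zero_char_poly_mult_commute)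
    (simp_all add: degree_scaled_coefficient_mat_def coefficient_mat_def)

lemma mat_trace_vertex_laplacian:
  assumes "no_isolated N M C"
  shows "mat_trace (vertex_laplacian N M C) = real N"
proof -
  have "mat_trace (vertex_laplacian N M C) = (\<Sum>i<N. (\<Sum>j<M. C i j * C i j) / hdeg M C i)"
    by (simp add: mat_trace_def vertex_laplacian_def)
  also have "\<dots> = (\<Sum>i<N. 1)"
    using hdeg_pos[OF assms] by (intro sum.cong) (auto simp: hdeg_def power2_eq_square
        dest: less_imp_neq[symmetric])
  finally show ?thesis by simp
qed

lemma vertex_laplacian_eigenvalue_real:
  assumes ni: "no_isolated N M C"
    and ev: "eigenvalue (map_mat complex_of_real (vertex_laplacian N M C)) a"
  shows "a \<in> \<real>"
proof -
  let ?Lc = "map_mat complex_of_real (vertex_laplacian N M C)"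
  let ?d = "\<lambda>i. complex_of_real (hdeg M C i)"
  obtain v where v: "v \<in> carrier_vec N" "v \<noteq> 0\<^sub>v N" and eigen: "?Lc *\<^sub>v v = a \<cdot>\<^sub>v v"
    using ev unfolding eigenvalue_def eigenvector_def by (auto simp: vertex_laplacian_def)
  define w where "w j = (\<Sum>k<N. of_real (C k j) * v $ k)" for j
  have row: "(\<Sum>j<M. of_real (C i j) * w j) = a * ?d i * v $ i" if i: "i < N" for i
  proof -
    have "(\<Sum>j<M. of_real (C i j) * w j) = (\<Sum>k<N. of_real (\<Sum>j<M. C i j * C k j) * v $ k)"
      unfolding w_def sum_distrib_left of_real_sum sum_distrib_right
      by (subst sum.swap) (simp add: mult.assoc)
    also have "\<dots> = ?d i * (?Lc *\<^sub>v v) $ i"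
      using i v(1) hdeg_pos[OF ni i]
      by (simp add: vertex_laplacian_def scalar_prod_def sum_distrib_left atLeast0LessThan)
    also have "\<dots> = a * ?d i * v $ i"
      using i v(1) by (simp add: eigen)
    finally show ?thesis .
  qed
  have "(\<Sum>j<M. w j * cnj (w j)) = (\<Sum>i<N. cnj (v $ i) * (\<Sum>j<M. of_real (C i j) * w j))"
    unfolding w_def cnj_sum sum_distrib_left sum_distrib_right
    by (subst sum.swap) (simp add: ac_simps)
  also have "\<dots> = a * (\<Sum>i<N. ?d i * (v $ i * cnj (v $ i)))"
    using row by (simp add: sum_distrib_left ac_simps)
  finally have rayleigh: "of_real (\<Sum>j<M. (cmod (w j))\<^sup>2)
      = a * of_real (\<Sum>i<N. hdeg M C i * (cmod (v $ i))\<^sup>2)"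
    by (simp add: complex_norm_square of_real_sum del: of_real_power)
  moreover have "(\<Sum>i<N. hdeg M C i * (cmod (v $ i))\<^sup>2) \<noteq> 0"
  proof -
    obtain i where "i < N" "v $ i \<noteq> 0" using v by (metis eq_vecI carrier_vecD index_zero_vec)
    moreover have "0 \<le> hdeg M C k * (cmod (v $ k))\<^sup>2" if "k < N" for k
      using hdeg_pos[OF ni that] by simp
    ultimately have "(\<Sum>i<N. hdeg M C i * (cmod (v $ i))\<^sup>2) > 0"
      using hdeg_pos[OF ni] by (intro sum_pos2[of _ i]) auto
    then show ?thesis by simp
  qed
  moreover have "a = of_real (s / t)" if "of_real s = a * of_real t" and "t \<noteq> 0" for s t
    using that by (simp add: eq_divide_eq)
  ultimately show "a \<in> \<real>" by (metis Reals_of_real)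
qed

theorem mainTheorem10:
  fixes N M :: nat and C :: "nat \<Rightarrow> nat \<Rightarrow> real"
  assumes "0 < N"
    and "no_isolated N M C"
    and "hconnected N M C"
  defines "L \<equiv> vertex_laplacian N M C"
    and "mV \<equiv> zero_mult (vertex_laplacian N M C)"
    and "mH \<equiv> zero_mult (hyperedge_laplacian N M C)"
  defines "lmin \<equiv> Min {k. eigenvalue L k \<and> k \<noteq> 0}"
    and "lmax \<equiv> Max {k. eigenvalue L k}"
  shows "real N - real mV = real M - real mH
    \<and> lmin \<le> real N / (real N - real mV)
    \<and> real N / (real N - real mV) = real N / (real M - real mH)
    \<and> real N / (real M - real mH) \<le> lmax
    \<and> (lmin = real N / (real N - real mV) \<longleftrightarrow> lmin = lmax)
    \<and> (real N / (real M - real mH) = lmax \<longleftrightarrow> lmin = lmax)"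
proof -
  have L: "L \<in> carrier_mat N N" unfolding L_def by (rule vertex_laplacian_carrier)
  obtain rs where factorized: "char_poly L = (\<Prod>r\<leftarrow>rs. [:- r, 1:])" and "length rs = N"
    using char_poly_factorized_real[OF L] vertex_laplacian_eigenvalue_real[OF assms(2)]
    unfolding L_def by blast
  have spectrum: "eigenvalue L k \<longleftrightarrow> k \<in> set rs" for k
    unfolding eigenvalue_root_char_poly[OF L] factorized poly_prod_list_zero_iff by auto
  have "sum_list rs = real N"
    using mat_trace_eq_sum_list_eigenvalues[OF L factorized] mat_trace_vertex_laplacian[OF assms(2)]
    unfolding L_def by simp
  moreover have "real N - real mV = real (length (filter (\<lambda>r. r \<noteq> 0) rs))"
    using sum_length_filter_compl[of "\<lambda>r. r \<noteq> 0" rs] \<open>length rs = N\<close>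
    unfolding mV_def zero_mult_def L_def[symmetric] factorized order_prod_list_linear
    by simp
  moreover have "real N - real mV = real M - real mH"
    using zero_mult_laplacians[of M N C] unfolding mV_def mH_def by linarith
  ultimately show ?thesis
    using nonzero_mean_bounds[of rs] \<open>0 < N\<close>
    unfolding lmin_def lmax_def spectrum by (simp add: Collect_mem_eq)
qed

end
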